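(* Let $N\ge 3$, $N_e\ge 2$, $L\ge 1$ be integers, $P>0$, $\tau\in(0,1]$, $\sigma_R>0$, $c_4\in\mathbb{C}\setminus\{0\}$, $\alpha,\beta\in\mathbb{C}$ with $\alpha\neq0$ and $|\alpha|^2+|\beta|^2=1$, $\theta\in\mathbb{R}$ fixed, and $\mathbf{h}\in\mathbb{C}^N$ not a scalar multiple of $\mathbf{a}(\theta)$. Let $\mathbf{X}\in\mathbb{C}^{N\times L}$ be a known matrix (not depending on $\phi$) satisfying $\frac1L\mathbf{X}\mathbf{X}^H=\gamma_1\mathbf{t}_1\mathbf{t}_1^H+\gamma_2\sum_{i=3}^N\mathbf{t}_i\mathbf{t}_i^H$, where $\gamma_1=P\tau$, $\gamma_2=\frac{(1-\tau)P}{N-2}$. For $\phi\in(-\pi/2,\pi/2)$ consider the observation $\mathbf{Y}_{sr}=c_4\mathbf{c}(\phi)\mathbf{a}(\theta)^H\mathbf{X}+\mathbf{Z}_{sr}$, where the entries of $\mathbf{Z}_{sr}\in\mathbb{C}^{N_e\times L}$ are i.i.d. $\mathcal{CN}(0,\sigma_R^2)$, with unknown parameter $\xi=[\phi,\mathrm{Re}(c_4),\mathrm{Im}(c_4)]^T$. Let $\mathbf{u}_e(\xi)=\mathrm{vec}(c_4\mathbf{c}(\phi)\mathbf{a}(\theta)^H\mathbf{X})$, $\mathbf{F}_{i,j}=\frac{2}{\sigma_R^2}\mathrm{Re}\left\{\frac{\partial\mathbf{u}_e^H}{\partial\xi_i}\frac{\partial\mathbf{u}_e}{\partial\xi_j}\right\}$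 and $\mathrm{CRB}(\phi)=[\mathbf{F}^{-1}]_{1,1}$. Then $$\mathrm{CRB}(\phi)=\frac{\sigma_R^2}{2|c_4|^2L\gamma_1\|\mathbf{c}'\|^2|\alpha|^2N},\qquad \|\mathbf{c}'\|^2=\frac{\pi^2\cos^2(\phi)N_e(N_e^2-1)}{12},$$ where $\mathbf{c}'$ is the derivative of $\mathbf{c}(\phi)$ with respect to $\phi$. Consequently, if $\phi\sim\mathcal{U}(-\pi/2,\pi/2)$, then for every $\epsilon>0$, with $x_\epsilon=\sqrt{6}\,\sigma_R\left(\epsilon N_eN\pi^2LP|c_4|^2|\alpha|^2\tau(N_e^2-1)\right)^{-1/2}$, we have $P(\mathrm{CRB}(\phi)>\epsilon)=\frac{2}{\pi}\sin^{-1}(x_\epsilon)$ if $x_\epsilon<1$, and $P(\mathrm{CRB}(\phi)>\epsilon)=1$ otherwise.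
   Context: $\mathbf{a}(\theta)\in\mathbb{C}^N$ has $i$-th entry $e^{-j\pi\sin(\theta)\frac{N-(2i-1)}{2}}$; $\mathbf{c}(\phi)\in\mathbb{C}^{N_e}$ has $m$-th entry $e^{-j\pi\sin(\phi)\frac{N_e-(2m-1)}{2}}$. Define $\tilde{\mathbf{a}}=\mathbf{a}/\|\mathbf{a}\|$, $\tilde{\mathbf{h}}=\frac{\mathbf{h}-(\tilde{\mathbf{a}}^H\mathbf{h})\tilde{\mathbf{a}}}{\|\mathbf{h}-(\tilde{\mathbf{a}}^H\mathbf{h})\tilde{\mathbf{a}}\|}$, $\mathbf{t}_1=\alpha\tilde{\mathbf{a}}+\beta\tilde{\mathbf{h}}$, and let $\mathbf{t}_3,\dots,\mathbf{t}_N$ be an orthonormal basis of the orthogonal complement of $\mathrm{span}\{\tilde{\mathbf{a}},\tilde{\mathbf{h}}\}$ in $\mathbb{C}^N$. $\mathrm{vec}$ denotes column-stacking vectorization. *)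

theory Defs
  imports "HOL-Probability.Probability"
begin

text \<open>Vectors in C^n are functions nat => complex, indexed by 1..n.\<close>

definition steer :: "nat \<Rightarrow> real \<Rightarrow> nat \<Rightarrow> complex" where
  "steer n ang i = exp (- \<i> * complex_of_real (pi * sin ang * (real n - (2 * real i - 1)) / 2))"

definition cinner :: "nat \<Rightarrow> (nat \<Rightarrow> complex) \<Rightarrow> (nat \<Rightarrow> complex) \<Rightarrow> complex" where
  "cinner n u v = (\<Sum>i=1..n. cnj (u i) * v i)"

definition cvnorm :: "nat \<Rightarrow> (nat \<Rightarrow> complex) \<Rightarrow> real" where
  "cvnorm n u = sqrt (\<Sum>i=1..n. (cmod (u i))^2)"

definition cnormalize :: "nat \<Rightarrow> (nat \<Rightarrow> complex) \<Rightarrow> nat \<Rightarrow> complex" where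
  "cnormalize n u = (\<lambda>i. u i / complex_of_real (cvnorm n u))"

definition atil :: "nat \<Rightarrow> real \<Rightarrow> nat \<Rightarrow> complex" where
  "atil N \<theta> = cnormalize N (steer N \<theta>)"

definition htil :: "nat \<Rightarrow> real \<Rightarrow> (nat \<Rightarrow> complex) \<Rightarrow> nat \<Rightarrow> complex" where
  "htil N \<theta> h = cnormalize N (\<lambda>i. h i - cinner N (atil N \<theta>) h * atil N \<theta> i)"

definition tvec1 :: "nat \<Rightarrow> real \<Rightarrow> (nat \<Rightarrow> complex) \<Rightarrow> complex \<Rightarrow> complex \<Rightarrow> nat \<Rightarrow> complex" where
  "tvec1 N \<theta> h \<alpha> \<beta> = (\<lambda>i. \<alpha> * atil N \<theta> i + \<beta> * htil N \<theta> h i)"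

text \<open>u_e(xi), xi = [phi, Re c4, Im c4]; entries indexed by (m,l), m in 1..Ne, l in 1..L
  (the entries of vec(c4 c(phi) a(theta)^H X)).\<close>
definition ue :: "nat \<Rightarrow> nat \<Rightarrow> real \<Rightarrow> (nat \<Rightarrow> nat \<Rightarrow> complex) \<Rightarrow> real^3 \<Rightarrow> nat \<times> nat \<Rightarrow> complex" where
  "ue N Ne \<theta> X \<xi> = (\<lambda>(m, l). Complex (\<xi>$2) (\<xi>$3) * steer Ne (\<xi>$1) m
        * (\<Sum>i=1..N. cnj (steer N \<theta> i) * X i l))"

definition due :: "nat \<Rightarrow> nat \<Rightarrow> real \<Rightarrow> (nat \<Rightarrow> nat \<Rightarrow> complex) \<Rightarrow> 3 \<Rightarrow> real^3 \<Rightarrow> nat \<times> nat \<Rightarrow> complex" where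
  "due N Ne \<theta> X i \<xi> k = vector_derivative (\<lambda>s. ue N Ne \<theta> X (\<xi> + s *\<^sub>R axis i 1) k) (at 0)"

definition fisher :: "nat \<Rightarrow> nat \<Rightarrow> nat \<Rightarrow> real \<Rightarrow> (nat \<Rightarrow> nat \<Rightarrow> complex) \<Rightarrow> real \<Rightarrow> real^3 \<Rightarrow> real^3^3" where
  "fisher N Ne L \<theta> X \<sigma> \<xi> = (\<chi> i j. 2 / \<sigma>^2 *
      Re (\<Sum>k\<in>{1..Ne}\<times>{1..L}. cnj (due N Ne \<theta> X i \<xi> k) * due N Ne \<theta> X j \<xi> k))"

definition crb :: "nat \<Rightarrow> nat \<Rightarrow> nat \<Rightarrow> real \<Rightarrow> (nat \<Rightarrow> nat \<Rightarrow> complex) \<Rightarrow> real \<Rightarrow> complex \<Rightarrow> real \<Rightarrow> real" where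
  "crb N Ne L \<theta> X \<sigma> c4 \<phi> = matrix_inv (fisher N Ne L \<theta> X \<sigma> (vector [\<phi>, Re c4, Im c4])) $ 1 $ 1"

definition dnorm2 :: "nat \<Rightarrow> real \<Rightarrow> real" where
  "dnorm2 Ne \<phi> = (\<Sum>m=1..Ne. (cmod (vector_derivative (\<lambda>p. steer Ne p m) (at \<phi>)))^2)"

end

theory Submission
  imports Defs
begin

text \<open>
  Every partial derivative of \<open>u\<^sub>e = vec(c\<^sub>4 c(\<phi>) a(\<theta>)\<^sup>H X)\<close> is a receive-side vector
  tensored with \<open>a(\<theta>)\<^sup>H X\<close>, so the Fisher matrix is \<open>2/\<sigma>\<^sup>2 \<parallel>a\<^sup>H X\<parallel>\<^sup>2 Re G\<close>, where \<open>G\<close> is the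
  Gram matrix of \<open>c\<^sub>4 c'(\<phi>)\<close>, \<open>c(\<phi>)\<close> and \<open>i c(\<phi>)\<close>. The array is centred
  (\<open>\<Sum>\<^sub>m N\<^sub>e - (2m - 1) = 0\<close>), which makes \<open>c'\<close> orthogonal to \<open>c\<close>; hence \<open>Re G\<close> is diagonal
  and \<open>CRB(\<phi>) = 1 / F\<^sub>1\<^sub>1\<close>. The beam energy \<open>\<parallel>a\<^sup>H X\<parallel>\<^sup>2 = a\<^sup>H X X\<^sup>H a\<close> only sees the
  \<open>t\<^sub>1\<close> component of the covariance, because \<open>a \<bottom> t\<^sub>k\<close> for \<open>k \<ge> 3\<close>, and \<open>a\<^sup>H t\<^sub>1 = \<alpha> \<surd>N\<close>.
  Thus \<open>CRB(\<phi>)\<close> is a constant over \<open>cos\<^sup>2 \<phi>\<close>, the event \<open>CRB(\<phi>) > \<epsilon>\<close> is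
  \<open>|\<phi>| > arccos x\<^sub>\<epsilon>\<close>, and its probability is \<open>1 - 2 arccos x\<^sub>\<epsilon> / \<pi> = 2 arcsin x\<^sub>\<epsilon> / \<pi>\<close>.
\<close>

lemma cinner_add_right: "cinner n u (\<lambda>i. v i + w i) = cinner n u v + cinner n u w"
  by (simp add: cinner_def algebra_simps sum.distrib)

lemma cinner_diff_right: "cinner n u (\<lambda>i. v i - w i) = cinner n u v - cinner n u w"
  by (simp add: cinner_def algebra_simps sum_subtractf)

lemma cinner_mult_right: "cinner n u (\<lambda>i. c * v i) = c * cinner n u v"
  by (simp add: cinner_def algebra_simps sum_distrib_left)

lemma cinner_divide_left: "cinner n (\<lambda>i. u i / of_real r) v = cinner n u v / of_real r"
  by (simp add: cinner_def sum_divide_distrib)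

lemma cinner_divide_right: "cinner n u (\<lambda>i. v i / c) = cinner n u v / c"
  by (simp add: cinner_def sum_divide_distrib)

lemma cinner_normalize_orthogonal:
  assumes "cinner n e e = 1"
  shows "cinner n e (cnormalize n (\<lambda>i. v i - cinner n e v * e i)) = 0"
  by (simp add: cnormalize_def cinner_divide_right cinner_diff_right cinner_mult_right assms)

lemma matrix_inv_diagonal:
  fixes A :: "'a::field^'n^'n"
  assumes "\<And>i j. i \<noteq> j \<Longrightarrow> A$i$j = 0" and "\<And>i. A$i$i \<noteq> 0"
  shows "matrix_inv A = (\<chi> i j. if i = j then inverse (A$i$i) else 0)"
proof -
  define B :: "'a^'n^'n" where "B = (\<chi> i j. if i = j then inverse (A$i$i) else 0)"
  have "(A ** B) $ i $ j = A$i$j * inverse (A$j$j)" "(B ** A) $ i $ j = inverse (A$i$i) * A$i$j" for i j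
    by (simp_all add: matrix_matrix_mult_def B_def if_distrib [of "\<lambda>x. _ * x"]
        if_distrib [of "\<lambda>x. x * _"] cong: if_cong)
  then have "A ** B = mat 1" "B ** A = mat 1"
    using assms by (auto simp: mat_def vec_eq_iff)
  then have inv: "A ** matrix_inv A = mat 1"
    unfolding matrix_inv_def by (metis (mono_tags, lifting) someI)
  have "matrix_inv A = (B ** A) ** matrix_inv A"
    using \<open>B ** A = mat 1\<close> by simp
  also have "\<dots> = B"
    using inv by (simp flip: matrix_mul_assoc)
  finally show ?thesis
    by (simp add: B_def)
qed

definition quad_form :: "nat \<Rightarrow> (nat \<Rightarrow> nat \<Rightarrow> complex) \<Rightarrow> (nat \<Rightarrow> complex) \<Rightarrow> complex" where
  "quad_form n M a = (\<Sum>i=1..n. \<Sum>j=1..n. cnj (a i) * M i j * a j)"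

lemma quad_form_outer: "quad_form n (\<lambda>i j. v i * cnj (v j)) a = of_real ((cmod (cinner n a v))\<^sup>2)"
proof -
  have "cinner n a v * cnj (cinner n a v) = (\<Sum>i=1..n. \<Sum>j=1..n. (cnj (a i) * v i) * (a j * cnj (v j)))"
    by (simp add: cinner_def sum_product)
  also have "\<dots> = quad_form n (\<lambda>i j. v i * cnj (v j)) a"
    by (simp add: quad_form_def mult_ac)
  finally show ?thesis
    by (simp only: complex_norm_square)
qed

lemma quad_form_cong:
  "(\<And>i j. i \<in> {1..n} \<Longrightarrow> j \<in> {1..n} \<Longrightarrow> M i j = M' i j) \<Longrightarrow> quad_form n M a = quad_form n M' a"
  unfolding quad_form_def by (intro sum.cong refl) auto

lemma quad_form_add: "quad_form n (\<lambda>i j. M i j + M' i j) a = quad_form n M a + quad_form n M' a"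
  by (simp add: quad_form_def algebra_simps sum.distrib)

lemma quad_form_mult: "quad_form n (\<lambda>i j. c * M i j) a = c * quad_form n M a"
  by (simp add: quad_form_def sum_distrib_left mult_ac)

lemma quad_form_sum: "quad_form n (\<lambda>i j. \<Sum>k\<in>K. M k i j) a = (\<Sum>k\<in>K. quad_form n (M k) a)"
proof -
  have "quad_form n (\<lambda>i j. \<Sum>k\<in>K. M k i j) a = (\<Sum>i=1..n. \<Sum>j=1..n. \<Sum>k\<in>K. cnj (a i) * M k i j * a j)"
    by (simp add: quad_form_def sum_distrib_left sum_distrib_right)
  also have "\<dots> = (\<Sum>k\<in>K. quad_form n (M k) a)"
    unfolding quad_form_def by (subst sum.swap, subst (2) sum.swap) (rule refl)
  finally show ?thesis .
qed

lemma sum_cmod_cinner_sq_covariance: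
  assumes cov: "\<forall>i\<in>{1..n}. \<forall>i'\<in>{1..n}. (\<Sum>l=1..L. X i l * cnj (X i' l)) / of_nat L
      = of_real c1 * u i * cnj (u i') + of_real c2 * (\<Sum>k\<in>K. t k i * cnj (t k i'))"
  shows "(\<Sum>l=1..L. (cmod (cinner n a (\<lambda>i. X i l)))\<^sup>2)
      = real L * (c1 * (cmod (cinner n a u))\<^sup>2 + c2 * (\<Sum>k\<in>K. (cmod (cinner n a (t k)))\<^sup>2))"
proof -
  have sum_X: "(\<Sum>l=1..L. X i l * cnj (X j l))
      = of_nat L * (of_real c1 * u i * cnj (u j) + of_real c2 * (\<Sum>k\<in>K. t k i * cnj (t k j)))"
    if "i \<in> {1..n}" "j \<in> {1..n}" for i j
    using cov that by (cases "L = 0") (auto simp: field_simps)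
  have "of_real (\<Sum>l=1..L. (cmod (cinner n a (\<lambda>i. X i l)))\<^sup>2)
      = quad_form n (\<lambda>i j. \<Sum>l=1..L. X i l * cnj (X j l)) a"
    by (simp only: quad_form_sum quad_form_outer of_real_sum)
  also have "\<dots> = quad_form n (\<lambda>i j. of_nat L * (of_real c1 * (u i * cnj (u j))
      + of_real c2 * (\<Sum>k\<in>K. t k i * cnj (t k j)))) a"
    by (rule quad_form_cong) (simp only: sum_X mult.assoc)
  also have "\<dots> = of_real (real L * (c1 * (cmod (cinner n a u))\<^sup>2 + c2 * (\<Sum>k\<in>K. (cmod (cinner n a (t k)))\<^sup>2)))"
    by (simp add: quad_form_mult quad_form_add quad_form_sum quad_form_outer)
  finally show ?thesis
    by (simp only: of_real_eq_iff)
qed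

lemma cmod_steer [simp]: "cmod (steer n p m) = 1"
  by (simp add: steer_def)

lemma cnj_steer_mult_steer [simp]: "cnj (steer n p m) * steer n p m = 1"
  using complex_norm_square[of "steer n p m"] by (simp add: mult.commute)

lemma cvnorm_steer: "cvnorm n (steer n p) = sqrt (real n)"
  by (simp add: cvnorm_def)

lemma cinner_steer_self: "cinner n (steer n p) (steer n p) = of_nat n"
  by (simp add: cinner_def)

lemma cinner_steer_eq_atil: "cinner N (steer N \<theta>) v = of_real (sqrt (real N)) * cinner N (atil N \<theta>) v"
proof (cases "N = 0")
  case False
  then show ?thesis by (simp add: atil_def cnormalize_def cvnorm_steer cinner_divide_left)
qed (simp add: cinner_def)

lemma cinner_atil_self: "N \<ge> 1 \<Longrightarrow> cinner N (atil N \<theta>) (atil N \<theta>) = 1"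
  by (simp add: atil_def cnormalize_def cvnorm_steer cinner_divide_left cinner_divide_right
      cinner_steer_self flip: of_real_mult)

lemma cinner_steer_tvec1:
  assumes "N \<ge> 1"
  shows "cinner N (steer N \<theta>) (tvec1 N \<theta> h \<alpha> \<beta>) = \<alpha> * of_real (sqrt (real N))"
  using assms cinner_normalize_orthogonal[OF cinner_atil_self[OF assms]]
  by (simp add: tvec1_def htil_def cinner_add_right cinner_mult_right cinner_steer_eq_atil cinner_atil_self)

lemma beam_energy_eq:
  assumes "N \<ge> 1"
    and orth: "\<forall>k\<in>{3..N}. cinner N (atil N \<theta>) (t k) = 0"
    and cov: "\<forall>i\<in>{1..N}. \<forall>i'\<in>{1..N}. (\<Sum>l=1..L. X i l * cnj (X i' l)) / of_nat L
      = of_real \<gamma>\<^sub>1 * tvec1 N \<theta> h \<alpha> \<beta> i * cnj (tvec1 N \<theta> h \<alpha> \<beta> i')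
        + of_real \<gamma>\<^sub>2 * (\<Sum>k=3..N. t k i * cnj (t k i'))"
  shows "(\<Sum>l=1..L. (cmod (cinner N (steer N \<theta>) (\<lambda>i. X i l)))\<^sup>2) = real L * \<gamma>\<^sub>1 * (cmod \<alpha>)\<^sup>2 * real N"
proof -
  have "\<forall>k\<in>{3..N}. cinner N (steer N \<theta>) (t k) = 0"
    using orth by (simp add: cinner_steer_eq_atil)
  then show ?thesis
    using sum_cmod_cinner_sq_covariance[OF cov, of "steer N \<theta>"] assms(1)
    by (simp add: cinner_steer_tvec1 norm_mult power_mult_distrib)
qed

definition array_offset :: "nat \<Rightarrow> nat \<Rightarrow> real" where
  "array_offset n m = real n - (2 * real m - 1)"

lemma has_vector_derivative_steer:
  "((\<lambda>p. steer n p m) has_vector_derivative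
      - \<i> * of_real (pi * cos p * array_offset n m / 2) * steer n p m) (at p)"
proof -
  have "((\<lambda>p. complex_of_real (pi * sin p * array_offset n m / 2)) has_vector_derivative
          of_real (pi * cos p * array_offset n m / 2)) (at p)"
    by (auto intro!: has_vector_derivative_of_real derivative_eq_intros)
  moreover have "((\<lambda>z. exp (- \<i> * z)) has_field_derivative - \<i> * exp (- \<i> * z)) (at z)" for z
    by (auto intro!: derivative_eq_intros)
  ultimately show ?thesis
    using field_vector_diff_chain_at by (fastforce simp: steer_def array_offset_def o_def mult_ac)
qed

lemma sum_array_offset_upto:
  "(\<Sum>m=1..k. array_offset n m) = real k * real n - real k ^ 2"
  by (induction k) (auto simp: array_offset_def algebra_simps power2_eq_square)

lemma sum_array_offset_sq_upto:
  "(\<Sum>m=1..k. (array_offset n m)\<^sup>2) = real k * (real n + 1)\<^sup>2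
     - 2 * (real n + 1) * real k * (real k + 1) + 2 * real k * (real k + 1) * (2 * real k + 1) / 3"
  by (induction k) (simp_all add: array_offset_def field_simps power2_eq_square)

lemma sum_array_offset: "(\<Sum>m=1..n. array_offset n m) = 0"
  using sum_array_offset_upto[of n n] by (simp add: power2_eq_square)

lemma sum_array_offset_sq: "(\<Sum>m=1..n. (array_offset n m)\<^sup>2) = real n * ((real n)\<^sup>2 - 1) / 3"
  using sum_array_offset_sq_upto[of n n] by (simp add: algebra_simps power2_eq_square)

lemma vector_derivative_steer:
  "vector_derivative (\<lambda>p. steer n p m) (at p) = - \<i> * of_real (pi * cos p * array_offset n m / 2) * steer n p m"
  by (rule vector_derivative_at[OF has_vector_derivative_steer])

lemma dnorm2_eq: "dnorm2 n p = pi\<^sup>2 * (cos p)\<^sup>2 * real n * ((real n)\<^sup>2 - 1) / 12"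
proof -
  have "dnorm2 n p = (pi * cos p / 2)\<^sup>2 * (\<Sum>m=1..n. (array_offset n m)\<^sup>2)"
    by (simp add: dnorm2_def vector_derivative_steer norm_mult power_mult_distrib power_divide sum_distrib_left)
  then show ?thesis
    unfolding sum_array_offset_sq by (simp add: power_mult_distrib power_divide)
qed

definition rx_partial :: "nat \<Rightarrow> complex \<Rightarrow> real \<Rightarrow> 3 \<Rightarrow> nat \<Rightarrow> complex" where
  "rx_partial Ne c p i m =
     (if i = 1 then c * vector_derivative (\<lambda>q. steer Ne q m) (at p)
      else if i = 2 then steer Ne p m else \<i> * steer Ne p m)"

lemma ue_eq:
  "ue N Ne \<theta> X \<xi> (m, l) = Complex (\<xi>$2) (\<xi>$3) * steer Ne (\<xi>$1) m * cinner N (steer N \<theta>) (\<lambda>j. X j l)"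
  by (simp add: ue_def cinner_def)

lemma due_eq:
  "due N Ne \<theta> X i \<xi> (m, l) =
     rx_partial Ne (Complex (\<xi>$2) (\<xi>$3)) (\<xi>$1) i m * cinner N (steer N \<theta>) (\<lambda>j. X j l)"
proof -
  let ?b = "cinner N (steer N \<theta>) (\<lambda>j. X j l)"
  let ?c = "Complex (\<xi>$2) (\<xi>$3)"
  let ?u = "\<lambda>s. ue N Ne \<theta> X (\<xi> + s *\<^sub>R axis i 1) (m, l)"
  have "(?u has_vector_derivative rx_partial Ne ?c (\<xi>$1) i m * ?b) (at 0)"
  proof -
    consider "i = 1" | "i = 2" | "i = 3" using exhaust_3 by blast
    then show ?thesis
    proof cases
      case 1
      have u: "?u = (\<lambda>s. ?c * (steer Ne (\<xi>$1 + s) m) * ?b)"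
        by (simp add: 1 ue_eq axis_def)
      have "((\<lambda>s. \<xi>$1 + s) has_vector_derivative 1) (at 0)"
        by (auto intro!: derivative_eq_intros)
      moreover have "((\<lambda>q. steer Ne q m) has_vector_derivative
          vector_derivative (\<lambda>q. steer Ne q m) (at (\<xi>$1))) (at ((\<lambda>s. \<xi>$1 + s) 0))"
        using has_vector_derivative_steer by (simp add: vector_derivative_steer)
      ultimately have "((\<lambda>q. steer Ne q m) \<circ> (\<lambda>s. \<xi>$1 + s) has_vector_derivative
          1 *\<^sub>R vector_derivative (\<lambda>q. steer Ne q m) (at (\<xi>$1))) (at 0)"
        by (rule vector_diff_chain_at)
      then show ?thesis
        unfolding u by (auto intro!: derivative_eq_intros simp: 1 rx_partial_def o_def)
    next
      case 2
      have "Complex (\<xi>$2 + s) (\<xi>$3) = ?c + of_real s" for s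
        by (simp add: complex_eq_iff)
      then have u: "?u = (\<lambda>s. (?c + of_real s) * steer Ne (\<xi>$1) m * ?b)"
        by (simp add: 2 ue_eq axis_def)
      show ?thesis
        unfolding u by (auto intro!: derivative_eq_intros simp: 2 rx_partial_def)
    next
      case 3
      have "Complex (\<xi>$2) (\<xi>$3 + s) = ?c + \<i> * of_real s" for s
        by (simp add: complex_eq_iff)
      then have u: "?u = (\<lambda>s. (?c + \<i> * of_real s) * steer Ne (\<xi>$1) m * ?b)"
        by (simp add: 3 ue_eq axis_def)
      show ?thesis
        unfolding u by (auto intro!: derivative_eq_intros simp: 3 rx_partial_def)
    qed
  qed
  then show ?thesis
    unfolding due_def by (rule vector_derivative_at)
qed

definition rx_gram :: "nat \<Rightarrow> complex \<Rightarrow> real \<Rightarrow> 3 \<Rightarrow> 3 \<Rightarrow> real" where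
  "rx_gram Ne c p i j = Re (\<Sum>m=1..Ne. cnj (rx_partial Ne c p i m) * rx_partial Ne c p j m)"

lemma rx_gram_commute: "rx_gram Ne c p i j = rx_gram Ne c p j i"
proof -
  have "(\<Sum>m=1..Ne. cnj (rx_partial Ne c p i m) * rx_partial Ne c p j m)
      = cnj (\<Sum>m=1..Ne. cnj (rx_partial Ne c p j m) * rx_partial Ne c p i m)"
    by (simp add: mult.commute)
  then show ?thesis
    unfolding rx_gram_def by (metis cnj.sel(1))
qed

lemma rx_gram_eq:
  "rx_gram Ne c p i j = (if i \<noteq> j then 0 else if i = 1 then (cmod c)\<^sup>2 * dnorm2 Ne p else real Ne)"
proof -
  define r where "r m = pi * cos p * array_offset Ne m / 2" for m
  have Ds: "cnj (vector_derivative (\<lambda>q. steer Ne q m) (at p)) * steer Ne p m = \<i> * of_real (r m)" for m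
    by (simp add: vector_derivative_steer r_def mult.assoc)
  have "(\<Sum>m=1..Ne. r m) = 0"
    using sum_array_offset[of Ne] by (simp add: r_def flip: sum_distrib_left sum_divide_distrib)
  then have sum_Ds: "(\<Sum>m=1..Ne. cnj (vector_derivative (\<lambda>q. steer Ne q m) (at p)) * steer Ne p m) = 0"
    unfolding Ds by (simp flip: sum_distrib_left of_real_sum)
  have "cnj z * z = of_real ((cmod z)\<^sup>2)" for z :: complex
    by (subst complex_norm_square) (rule mult.commute)
  then have "rx_gram Ne c p 1 1 = (cmod c)\<^sup>2 * dnorm2 Ne p"
    by (simp add: rx_gram_def rx_partial_def dnorm2_def norm_mult power_mult_distrib
        sum_distrib_left del: complex_cnj_mult)
  moreover have "rx_gram Ne c p 1 2 = 0"
    using sum_Ds by (simp add: rx_gram_def rx_partial_def mult.assoc flip: sum_distrib_left)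
  moreover have "(\<Sum>m=1..Ne. cnj (rx_partial Ne c p 1 m) * rx_partial Ne c p 3 m)
      = \<i> * cnj c * (\<Sum>m=1..Ne. cnj (vector_derivative (\<lambda>q. steer Ne q m) (at p)) * steer Ne p m)"
    by (simp add: rx_partial_def sum_distrib_left mult_ac)
  then have "rx_gram Ne c p 1 3 = 0"
    using sum_Ds by (simp add: rx_gram_def)
  moreover have "cnj (\<i> * steer Ne p m) * (\<i> * steer Ne p m) = 1" for m
    using cnj_steer_mult_steer[of Ne p m] by (simp add: mult_ac)
  then have "rx_gram Ne c p 2 3 = 0" "rx_gram Ne c p 2 2 = real Ne" "rx_gram Ne c p 3 3 = real Ne"
    by (simp_all add: rx_gram_def rx_partial_def mult.assoc del: complex_cnj_mult)
  ultimately show ?thesis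
    using exhaust_3[of i] exhaust_3[of j] rx_gram_commute[of Ne c p] by auto
qed

lemma fisher_eq:
  "fisher N Ne L \<theta> X \<sigma> \<xi> $ i $ j = 2 / \<sigma>\<^sup>2
     * (\<Sum>l=1..L. (cmod (cinner N (steer N \<theta>) (\<lambda>k. X k l)))\<^sup>2)
     * rx_gram Ne (Complex (\<xi>$2) (\<xi>$3)) (\<xi>$1) i j"
proof -
  let ?R = "\<lambda>i m. rx_partial Ne (Complex (\<xi>$2) (\<xi>$3)) (\<xi>$1) i m"
  let ?b = "\<lambda>l. cinner N (steer N \<theta>) (\<lambda>k. X k l)"
  have energy: "(\<Sum>l=1..L. cnj (?b l) * ?b l) = of_real (\<Sum>l=1..L. (cmod (?b l))\<^sup>2)"
    unfolding of_real_sum complex_norm_square by (simp add: mult.commute)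
  have "(\<Sum>k\<in>{1..Ne}\<times>{1..L}. cnj (due N Ne \<theta> X i \<xi> k) * due N Ne \<theta> X j \<xi> k)
      = (\<Sum>m=1..Ne. \<Sum>l=1..L. (cnj (?R i m) * ?R j m) * (cnj (?b l) * ?b l))"
    unfolding sum.cartesian_product by (intro sum.cong refl) (auto simp: due_eq mult_ac)
  also have "\<dots> = (\<Sum>m=1..Ne. cnj (?R i m) * ?R j m) * (\<Sum>l=1..L. cnj (?b l) * ?b l)"
    by (simp add: sum_product)
  also have "\<dots> = (\<Sum>l=1..L. (cmod (?b l))\<^sup>2) *\<^sub>R (\<Sum>m=1..Ne. cnj (?R i m) * ?R j m)"
    unfolding energy by (simp add: scaleR_conv_of_real mult.commute)
  finally have "(\<Sum>k\<in>{1..Ne}\<times>{1..L}. cnj (due N Ne \<theta> X i \<xi> k) * due N Ne \<theta> X j \<xi> k)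
      = (\<Sum>l=1..L. (cmod (?b l))\<^sup>2) *\<^sub>R (\<Sum>m=1..Ne. cnj (?R i m) * ?R j m)" .
  then show ?thesis
    unfolding fisher_def rx_gram_def vec_lambda_beta by simp
qed

lemma dnorm2_pos: "Ne \<ge> 2 \<Longrightarrow> cos \<phi> \<noteq> 0 \<Longrightarrow> dnorm2 Ne \<phi> > 0"
  by (simp add: dnorm2_eq one_less_power)

lemma crb_eq:
  assumes "\<sigma> \<noteq> 0" "c \<noteq> 0" "dnorm2 Ne \<phi> \<noteq> 0"
    and energy: "(\<Sum>l=1..L. (cmod (cinner N (steer N \<theta>) (\<lambda>k. X k l)))\<^sup>2) = B" and "B \<noteq> 0"
  shows "crb N Ne L \<theta> X \<sigma> c \<phi> = \<sigma>\<^sup>2 / (2 * (cmod c)\<^sup>2 * dnorm2 Ne \<phi> * B)"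
proof -
  define F where "F = fisher N Ne L \<theta> X \<sigma> (vector [\<phi>, Re c, Im c])"
  have F: "F $ i $ j = 2 / \<sigma>\<^sup>2 * B * rx_gram Ne c \<phi> i j" for i j
    unfolding F_def fisher_eq energy by simp
  have "Ne \<noteq> 0"
    using \<open>dnorm2 Ne \<phi> \<noteq> 0\<close> by (auto simp: dnorm2_eq)
  then have "matrix_inv F $ 1 $ 1 = inverse (F $ 1 $ 1)"
    using assms by (simp add: matrix_inv_diagonal F rx_gram_eq)
  then show ?thesis
    using assms by (simp add: crb_def F_def [symmetric] F rx_gram_eq field_simps)
qed

lemma crb_uniform_linear_array:
  assumes "N \<ge> 1" "Ne \<ge> 2" "L \<ge> 1" "\<gamma>\<^sub>1 > 0" "\<sigma> \<noteq> 0" "c \<noteq> 0" "\<alpha> \<noteq> 0" "cos \<phi> \<noteq> 0"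
    and orth: "\<forall>k\<in>{3..N}. cinner N (atil N \<theta>) (t k) = 0"
    and cov: "\<forall>i\<in>{1..N}. \<forall>i'\<in>{1..N}. (\<Sum>l=1..L. X i l * cnj (X i' l)) / of_nat L
      = of_real \<gamma>\<^sub>1 * tvec1 N \<theta> h \<alpha> \<beta> i * cnj (tvec1 N \<theta> h \<alpha> \<beta> i')
        + of_real \<gamma>\<^sub>2 * (\<Sum>k=3..N. t k i * cnj (t k i'))"
  shows "crb N Ne L \<theta> X \<sigma> c \<phi>
      = \<sigma>\<^sup>2 / (2 * (cmod c)\<^sup>2 * real L * \<gamma>\<^sub>1 * dnorm2 Ne \<phi> * (cmod \<alpha>)\<^sup>2 * real N)"
  using crb_eq[OF _ _ _ beam_energy_eq[OF _ orth cov]] dnorm2_pos[of Ne \<phi>] assms(1-8)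
  by (simp add: mult_ac)

lemma measure_uniform_cos_less:
  fixes x :: real
  assumes "x > 0"
  shows "measure (uniform_measure lborel {-pi/2<..<pi/2}) {\<phi>\<in>{-pi/2<..<pi/2}. cos \<phi> < x}
       = (if x < 1 then 2 / pi * arcsin x else 1)"
proof (cases "x \<le> 1")
  case True
  define a where "a = arccos x"
  have "0 \<le> a" "cos a = x"
    using assms True by (simp_all add: a_def arccos_lbound)
  have "arccos x < arccos 0"
    using assms True by (intro arccos_less_arccos) auto
  then have "a < pi/2"
    by (simp add: a_def)
  have "cos \<phi> < x \<longleftrightarrow> a < \<bar>\<phi>\<bar>" if "\<phi> \<in> {-pi/2<..<pi/2}" for \<phi>
  proof -
    have "\<bar>\<phi>\<bar> \<le> pi"
      using that by auto
    then show ?thesis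
      using cos_mono_less_eq[of "\<bar>\<phi>\<bar>" a] \<open>0 \<le> a\<close> \<open>a < pi/2\<close> \<open>cos a = x\<close> by simp
  qed
  then have "{\<phi>\<in>{-pi/2<..<pi/2}. cos \<phi> < x} = {-pi/2<..< -a} \<union> {a<..<pi/2}"
    using \<open>0 \<le> a\<close> \<open>a < pi/2\<close> by auto
  moreover have "measure lborel ({-pi/2<..< -a} \<union> {a<..<pi/2}) = pi - 2 * a"
    using \<open>0 \<le> a\<close> \<open>a < pi/2\<close> by (subst measure_Union) auto
  moreover have "{-pi/2<..<pi/2} \<inter> ({-pi/2<..< -a} \<union> {a<..<pi/2}) = {-pi/2<..< -a} \<union> {a<..<pi/2}"
    using \<open>0 \<le> a\<close> by auto
  ultimately have "measure (uniform_measure lborel {-pi/2<..<pi/2}) {\<phi>\<in>{-pi/2<..<pi/2}. cos \<phi> < x}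
      = (pi - 2 * a) / pi"
    by simp
  also have "\<dots> = (if x < 1 then 2 / pi * arcsin x else 1)"
    using True assms by (auto simp: a_def arccos_arcsin_eq field_simps)
  finally show ?thesis .
next
  case False
  then have "{\<phi>\<in>{-pi/2<..<pi/2}. cos \<phi> < x} = {-pi/2<..<pi/2}"
    by (auto intro: le_less_trans[OF cos_le_one])
  with False show ?thesis
    by simp
qed

lemma measure_uniform_inverse_cos_sq_gt:
  fixes s K \<epsilon> :: real
  assumes "s > 0" "K > 0" "\<epsilon> > 0"
  shows "let x = s * (\<epsilon> * K) powr (-1/2)
         in measure (uniform_measure lborel {-pi/2<..<pi/2})
              {\<phi>\<in>{-pi/2<..<pi/2}. s\<^sup>2 / (K * (cos \<phi>)\<^sup>2) > \<epsilon>}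
            = (if x < 1 then 2 / pi * arcsin x else 1)"
proof -
  define x where "x = s * (\<epsilon> * K) powr (-1/2)"
  have "x = sqrt (s\<^sup>2 / K / \<epsilon>)"
    using assms by (simp add: x_def powr_minus_divide powr_half_sqrt real_sqrt_divide real_sqrt_mult mult.commute)
  have "s\<^sup>2 / (K * (cos \<phi>)\<^sup>2) > \<epsilon> \<longleftrightarrow> cos \<phi> < x" if "\<phi> \<in> {-pi/2<..<pi/2}" for \<phi>
  proof -
    have "cos \<phi> > 0"
      using that by (auto intro!: cos_gt_zero_pi)
    then have "s\<^sup>2 / (K * (cos \<phi>)\<^sup>2) > \<epsilon> \<longleftrightarrow> sqrt ((cos \<phi>)\<^sup>2) < sqrt (s\<^sup>2 / K / \<epsilon>)"
      using assms by (simp only: real_sqrt_less_iff) (auto simp: field_simps)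
    with \<open>cos \<phi> > 0\<close> \<open>x = sqrt (s\<^sup>2 / K / \<epsilon>)\<close> show ?thesis
      by simp
  qed
  then have events: "{\<phi>\<in>{-pi/2<..<pi/2}. s\<^sup>2 / (K * (cos \<phi>)\<^sup>2) > \<epsilon>} = {\<phi>\<in>{-pi/2<..<pi/2}. cos \<phi> < x}"
    by auto
  have "x > 0"
    using assms by (simp add: x_def)
  then show ?thesis
    unfolding Let_def x_def [symmetric] events by (rule measure_uniform_cos_less)
qed

theorem lemma7:
  fixes N Ne L :: nat and P \<tau> \<sigma>R \<theta> :: real and c4 \<alpha> \<beta> :: complex
    and h :: "nat \<Rightarrow> complex" and X :: "nat \<Rightarrow> nat \<Rightarrow> complex" and t :: "nat \<Rightarrow> nat \<Rightarrow> complex"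
  assumes "N \<ge> 3" and "Ne \<ge> 2" and "L \<ge> 1" and "P > 0" and "0 < \<tau>" and "\<tau> \<le> 1" and "\<sigma>R > 0"
    and "c4 \<noteq> 0" and "\<alpha> \<noteq> 0" and "(cmod \<alpha>)^2 + (cmod \<beta>)^2 = 1"
    and "\<not> (\<exists>z. \<forall>i\<in>{1..N}. h i = z * steer N \<theta> i)"
    and "\<forall>k\<in>{3..N}. \<forall>k'\<in>{3..N}. cinner N (t k) (t k') = (if k = k' then 1 else 0)"
    and "\<forall>k\<in>{3..N}. cinner N (atil N \<theta>) (t k) = 0 \<and> cinner N (htil N \<theta> h) (t k) = 0"
    and "\<forall>i\<in>{1..N}. \<forall>i'\<in>{1..N}.
           (\<Sum>l=1..L. X i l * cnj (X i' l)) / of_nat L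
           = complex_of_real (P * \<tau>) * tvec1 N \<theta> h \<alpha> \<beta> i * cnj (tvec1 N \<theta> h \<alpha> \<beta> i')
             + complex_of_real ((1 - \<tau>) * P / (real N - 2)) * (\<Sum>k=3..N. t k i * cnj (t k i'))"
  shows "(\<forall>\<phi>\<in>{-pi/2<..<pi/2}.
            crb N Ne L \<theta> X \<sigma>R c4 \<phi>
              = \<sigma>R^2 / (2 * (cmod c4)^2 * real L * (P * \<tau>) * dnorm2 Ne \<phi> * (cmod \<alpha>)^2 * real N)
          \<and> dnorm2 Ne \<phi> = pi^2 * (cos \<phi>)^2 * real Ne * ((real Ne)^2 - 1) / 12)
       \<and> (\<forall>\<epsilon>>0. let x = sqrt 6 * \<sigma>R * (\<epsilon> * real Ne * real N * pi^2 * real L * P * (cmod c4)^2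
                            * (cmod \<alpha>)^2 * \<tau> * ((real Ne)^2 - 1)) powr (-1/2)
               in measure (uniform_measure lborel {-pi/2<..<pi/2})
                    {\<phi>\<in>{-pi/2<..<pi/2}. crb N Ne L \<theta> X \<sigma>R c4 \<phi> > \<epsilon>}
                  = (if x < 1 then 2 / pi * arcsin x else 1))"
proof -
  let ?I = "{-pi/2<..<pi/2} :: real set"
  have "N \<ge> 1" "(real Ne)\<^sup>2 > 1"
    using assms(1,2) by (simp_all add: one_less_power)
  have orth: "\<forall>k\<in>{3..N}. cinner N (atil N \<theta>) (t k) = 0"
    using assms(13) by blast
  have crb: "crb N Ne L \<theta> X \<sigma>R c4 \<phi>
      = \<sigma>R\<^sup>2 / (2 * (cmod c4)\<^sup>2 * real L * (P * \<tau>) * dnorm2 Ne \<phi> * (cmod \<alpha>)\<^sup>2 * real N)"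
    if "\<phi> \<in> ?I" for \<phi>
    using crb_uniform_linear_array[OF \<open>N \<ge> 1\<close> assms(2,3) _ _ assms(8,9) _ orth assms(14)]
      cos_gt_zero_pi[of \<phi>] that assms(4,5,7) by simp
  define K where "K = real Ne * real N * pi\<^sup>2 * real L * P * (cmod c4)\<^sup>2 * (cmod \<alpha>)\<^sup>2 * \<tau> * ((real Ne)\<^sup>2 - 1)"
  have "K > 0"
    using assms \<open>N \<ge> 1\<close> \<open>(real Ne)\<^sup>2 > 1\<close> by (simp add: K_def)
  have "crb N Ne L \<theta> X \<sigma>R c4 \<phi> = (sqrt 6 * \<sigma>R)\<^sup>2 / (K * (cos \<phi>)\<^sup>2)" if "\<phi> \<in> ?I" for \<phi>
    unfolding crb [OF that] by (simp add: dnorm2_eq K_def power_mult_distrib mult_ac)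
  then have events: "{\<phi>\<in>?I. crb N Ne L \<theta> X \<sigma>R c4 \<phi> > \<epsilon>}
      = {\<phi>\<in>?I. (sqrt 6 * \<sigma>R)\<^sup>2 / (K * (cos \<phi>)\<^sup>2) > \<epsilon>}" for \<epsilon>
    by auto
  have product: "\<epsilon> * real Ne * real N * pi\<^sup>2 * real L * P * (cmod c4)\<^sup>2 * (cmod \<alpha>)\<^sup>2 * \<tau> * ((real Ne)\<^sup>2 - 1)
      = \<epsilon> * K" for \<epsilon>
    by (simp add: K_def mult_ac)
  have "\<forall>\<epsilon>>0. let x = sqrt 6 * \<sigma>R * (\<epsilon> * K) powr (-1/2)
      in measure (uniform_measure lborel ?I) {\<phi>\<in>?I. (sqrt 6 * \<sigma>R)\<^sup>2 / (K * (cos \<phi>)\<^sup>2) > \<epsilon>}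
         = (if x < 1 then 2 / pi * arcsin x else 1)"
    using measure_uniform_inverse_cos_sq_gt[of "sqrt 6 * \<sigma>R" K] \<open>K > 0\<close> assms(7) by simp
  then show ?thesis
    unfolding events product using crb dnorm2_eq by blast
qed

end
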